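(* Consider an $N$-agent Markov decision process with finite state space $\mathcal{S}$, finite individual action spaces $\mathcal{A}^i$, joint action space $\mathcal{A}=\prod_{i=1}^N\mathcal{A}^i$, bounded individual rewards and discount factor $\gamma\in(0,1)$. Let $\boldsymbol{\pi}'$ and $\boldsymbol{\pi}$ be joint policies and let $\boldsymbol{\tilde{\Pi}}=(\boldsymbol{\tilde{\pi}}^1,\dots,\boldsymbol{\tilde{\pi}}^N)$ be a collection of suggesting joint policies. Then $$\zeta_{\boldsymbol{\pi}'}(\boldsymbol{\tilde{\Pi}}) - \zeta_{\boldsymbol{\pi}'}(\boldsymbol{\pi}) \leq f^{\boldsymbol{\pi}'} + \sum_{i=1}^N \frac{1}{2} \max_{s, \boldsymbol{a}} \big| A_i^{\boldsymbol{\pi}'}(s, \boldsymbol{a}) \big| \cdot \sum_{s, \boldsymbol{a}}\big(\boldsymbol{\tilde{\pi}}^i(\boldsymbol{a}|s) - \boldsymbol{\pi}(\boldsymbol{a}|s)\big)^2,$$ where $f^{\boldsymbol{\pi}'} = \sum_{i=1}^N \frac{1}{2} \max_{s, \boldsymbol{a}} \big| A_i^{\boldsymbol{\pi}'}(s, \boldsymbol{a}) \big| \cdot |\mathcal{A}| \cdot \Vert d^{\boldsymbol{\pi}'} \Vert_2^2$ and $\|d^{\boldsymbol{\pi}'}\|_2^2=\sum_s (d^{\boldsymbol{\pi}'}(s))^2$.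
   Context: Trajectories under a joint policy $\boldsymbol{\pi}$ (a distribution $\boldsymbol{\pi}(\cdot|s)$ over joint actions, given by a product of individual policies) are generated by $s_0\sim d(s_0)$, $\boldsymbol{a}_t\sim\boldsymbol{\pi}(\cdot|s_t)$, $s_{t+1}\sim\mathcal{P}(\cdot|s_t,\boldsymbol{a}_t)$, rewards $r_t^i=\mathcal{R}^i(s_t,\boldsymbol{a}_t)$. Individual value functions $V_i^{\boldsymbol{\pi}}(s)=\mathbb{E}[\sum_{t\ge0}\gamma^t r^i_t\mid s_0=s]$, $Q_i^{\boldsymbol{\pi}}(s,\boldsymbol{a})=\mathbb{E}[\sum_{t\ge0}\gamma^t r^i_t\mid s_0=s,\boldsymbol{a}_0=\boldsymbol{a}]$, advantage $A_i^{\boldsymbol{\pi}}=Q_i^{\boldsymbol{\pi}}-V_i^{\boldsymbol{\pi}}$. The state visitation distribution is $d^{\boldsymbol{\pi}}(s)=\sum_{t\ge0}\gamma^tP(s_t=s\mid\boldsymbol{\pi})$. A suggesting joint policy of agent $i$ is $\boldsymbol{\tilde{\pi}}^i(\boldsymbol{a}|s)=\prod_{j=1}^N\pi^{ij}(a^j|s)$, where $\pi^{ii}=\pi^i$ is agent $i$'s own policy and, for $j\ne i$, $\pi^{ij}$ is an arbitrary policy for agent $j$ ("agent $i$'s suggestion for agent $j$"). For a collection $\boldsymbol{\tilde{\Pi}}=(\boldsymbol{\tilde{\pi}}^1,\dots,\boldsymbol{\tilde{\pi}}^N)$, $\zeta_{\boldsymbol{\pi}'}(\boldsymbol{\tilde{\Pi}})=\sum_{i}\sum_s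 d^{\boldsymbol{\pi}'}(s)\sum_{\boldsymbol{a}}\boldsymbol{\tilde{\pi}}^i(\boldsymbol{a}|s)A_i^{\boldsymbol{\pi}'}(s,\boldsymbol{a})$, and for a single joint policy $\boldsymbol{\pi}$, $\zeta_{\boldsymbol{\pi}'}(\boldsymbol{\pi})=\sum_s d^{\boldsymbol{\pi}'}(s)\sum_{\boldsymbol{a}}\boldsymbol{\pi}(\boldsymbol{a}|s)\sum_iA_i^{\boldsymbol{\pi}'}(s,\boldsymbol{a})$ (the case $\boldsymbol{\tilde{\pi}}^i=\boldsymbol{\pi}$ for all $i$). *)

theory Defs
  imports "HOL-Analysis.Analysis" "HOL-Library.FuncSet"
begin

text \<open>Transition kernel P s a s', rewards R i s a,
 initial distribution d0.  A joint policy is given by individual policies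
 pol j s b (probability that agent j plays b in state s).\<close>

definition joint_actions :: "nat \<Rightarrow> (nat \<Rightarrow> 'a set) \<Rightarrow> (nat \<Rightarrow> 'a) set" where
  "joint_actions N Act = PiE {..<N} Act"

definition is_policy :: "('s \<Rightarrow> 'a \<Rightarrow> real) \<Rightarrow> 'a set \<Rightarrow> bool" where
  "is_policy p B \<longleftrightarrow> (\<forall>s. (\<forall>b\<in>B. p s b \<ge> 0) \<and> (\<Sum>b\<in>B. p s b) = 1)"

definition is_joint_policy :: "nat \<Rightarrow> (nat \<Rightarrow> 'a set) \<Rightarrow> (nat \<Rightarrow> 's \<Rightarrow> 'a \<Rightarrow> real) \<Rightarrow> bool" where
  "is_joint_policy N Act pol \<longleftrightarrow> (\<forall>j<N. is_policy (pol j) (Act j))"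

definition jprob :: "nat \<Rightarrow> (nat \<Rightarrow> 's \<Rightarrow> 'a \<Rightarrow> real) \<Rightarrow> 's \<Rightarrow> (nat \<Rightarrow> 'a) \<Rightarrow> real" where
  "jprob N pol s a = (\<Prod>j<N. pol j s (a j))"

definition Ppol :: "nat \<Rightarrow> (nat \<Rightarrow> 'a set) \<Rightarrow> ('s \<Rightarrow> (nat \<Rightarrow> 'a) \<Rightarrow> 's \<Rightarrow> real)
    \<Rightarrow> (nat \<Rightarrow> 's \<Rightarrow> 'a \<Rightarrow> real) \<Rightarrow> 's \<Rightarrow> 's \<Rightarrow> real" where
  "Ppol N Act P pol x y = (\<Sum>a\<in>joint_actions N Act. jprob N pol x a * P x a y)"

fun stepprob :: "nat \<Rightarrow> (nat \<Rightarrow> 'a set) \<Rightarrow> ('s::finite \<Rightarrow> (nat \<Rightarrow> 'a) \<Rightarrow> 's \<Rightarrow> real)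
    \<Rightarrow> (nat \<Rightarrow> 's \<Rightarrow> 'a \<Rightarrow> real) \<Rightarrow> nat \<Rightarrow> 's \<Rightarrow> 's \<Rightarrow> real" where
  "stepprob N Act P pol 0 x y = (if x = y then 1 else 0)"
| "stepprob N Act P pol (Suc t) x y =
     (\<Sum>z\<in>UNIV. stepprob N Act P pol t x z * Ppol N Act P pol z y)"

definition rpol :: "nat \<Rightarrow> (nat \<Rightarrow> 'a set) \<Rightarrow> (nat \<Rightarrow> 's \<Rightarrow> (nat \<Rightarrow> 'a) \<Rightarrow> real)
    \<Rightarrow> (nat \<Rightarrow> 's \<Rightarrow> 'a \<Rightarrow> real) \<Rightarrow> nat \<Rightarrow> 's \<Rightarrow> real" where
  "rpol N Act R pol i x = (\<Sum>a\<in>joint_actions N Act. jprob N pol x a * R i x a)"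

definition Vfun :: "nat \<Rightarrow> (nat \<Rightarrow> 'a set) \<Rightarrow> ('s::finite \<Rightarrow> (nat \<Rightarrow> 'a) \<Rightarrow> 's \<Rightarrow> real)
    \<Rightarrow> (nat \<Rightarrow> 's \<Rightarrow> (nat \<Rightarrow> 'a) \<Rightarrow> real) \<Rightarrow> real
    \<Rightarrow> (nat \<Rightarrow> 's \<Rightarrow> 'a \<Rightarrow> real) \<Rightarrow> nat \<Rightarrow> 's \<Rightarrow> real" where
  "Vfun N Act P R \<gamma> pol i s =
     (\<Sum>t. \<gamma> ^ t * (\<Sum>y\<in>UNIV. stepprob N Act P pol t s y * rpol N Act R pol i y))"

definition Qfun :: "nat \<Rightarrow> (nat \<Rightarrow> 'a set) \<Rightarrow> ('s::finite \<Rightarrow> (nat \<Rightarrow> 'a) \<Rightarrow> 's \<Rightarrow> real)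
    \<Rightarrow> (nat \<Rightarrow> 's \<Rightarrow> (nat \<Rightarrow> 'a) \<Rightarrow> real) \<Rightarrow> real
    \<Rightarrow> (nat \<Rightarrow> 's \<Rightarrow> 'a \<Rightarrow> real) \<Rightarrow> nat \<Rightarrow> 's \<Rightarrow> (nat \<Rightarrow> 'a) \<Rightarrow> real" where
  "Qfun N Act P R \<gamma> pol i s a =
     R i s a + \<gamma> * (\<Sum>y\<in>UNIV. P s a y * Vfun N Act P R \<gamma> pol i y)"

definition Afun :: "nat \<Rightarrow> (nat \<Rightarrow> 'a set) \<Rightarrow> ('s::finite \<Rightarrow> (nat \<Rightarrow> 'a) \<Rightarrow> 's \<Rightarrow> real)
    \<Rightarrow> (nat \<Rightarrow> 's \<Rightarrow> (nat \<Rightarrow> 'a) \<Rightarrow> real) \<Rightarrow> real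
    \<Rightarrow> (nat \<Rightarrow> 's \<Rightarrow> 'a \<Rightarrow> real) \<Rightarrow> nat \<Rightarrow> 's \<Rightarrow> (nat \<Rightarrow> 'a) \<Rightarrow> real" where
  "Afun N Act P R \<gamma> pol i s a =
     Qfun N Act P R \<gamma> pol i s a - Vfun N Act P R \<gamma> pol i s"

definition dvis :: "nat \<Rightarrow> (nat \<Rightarrow> 'a set) \<Rightarrow> ('s::finite \<Rightarrow> (nat \<Rightarrow> 'a) \<Rightarrow> 's \<Rightarrow> real)
    \<Rightarrow> ('s \<Rightarrow> real) \<Rightarrow> real \<Rightarrow> (nat \<Rightarrow> 's \<Rightarrow> 'a \<Rightarrow> real) \<Rightarrow> 's \<Rightarrow> real" where
  "dvis N Act P d0 \<gamma> pol s =
     (\<Sum>t. \<gamma> ^ t * (\<Sum>x\<in>UNIV. d0 x * stepprob N Act P pol t x s))"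

text \<open>zeta_{pi'}(Pi~): sugg i j is agent i's suggestion for agent j.\<close>
definition zeta_sugg :: "nat \<Rightarrow> (nat \<Rightarrow> 'a set) \<Rightarrow> ('s::finite \<Rightarrow> (nat \<Rightarrow> 'a) \<Rightarrow> 's \<Rightarrow> real)
    \<Rightarrow> (nat \<Rightarrow> 's \<Rightarrow> (nat \<Rightarrow> 'a) \<Rightarrow> real) \<Rightarrow> ('s \<Rightarrow> real) \<Rightarrow> real
    \<Rightarrow> (nat \<Rightarrow> 's \<Rightarrow> 'a \<Rightarrow> real) \<Rightarrow> (nat \<Rightarrow> nat \<Rightarrow> 's \<Rightarrow> 'a \<Rightarrow> real) \<Rightarrow> real" where
  "zeta_sugg N Act P R d0 \<gamma> pol' sugg =
     (\<Sum>i<N. \<Sum>s\<in>UNIV. dvis N Act P d0 \<gamma> pol' s *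
        (\<Sum>a\<in>joint_actions N Act. jprob N (sugg i) s a * Afun N Act P R \<gamma> pol' i s a))"

definition zeta_joint :: "nat \<Rightarrow> (nat \<Rightarrow> 'a set) \<Rightarrow> ('s::finite \<Rightarrow> (nat \<Rightarrow> 'a) \<Rightarrow> 's \<Rightarrow> real)
    \<Rightarrow> (nat \<Rightarrow> 's \<Rightarrow> (nat \<Rightarrow> 'a) \<Rightarrow> real) \<Rightarrow> ('s \<Rightarrow> real) \<Rightarrow> real
    \<Rightarrow> (nat \<Rightarrow> 's \<Rightarrow> 'a \<Rightarrow> real) \<Rightarrow> (nat \<Rightarrow> 's \<Rightarrow> 'a \<Rightarrow> real) \<Rightarrow> real" where
  "zeta_joint N Act P R d0 \<gamma> pol' pol =
     (\<Sum>s\<in>UNIV. dvis N Act P d0 \<gamma> pol' s *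
        (\<Sum>a\<in>joint_actions N Act. jprob N pol s a * (\<Sum>i<N. Afun N Act P R \<gamma> pol' i s a)))"

end

theory Submission
  imports Defs
begin

text \<open>Both zeta-values are d-weighted sums of advantages, so their difference is the sum
  over i, s, a of d(s) (pi~^i(a|s) - pi(a|s)) A_i(s,a). By AM-GM each summand is at most
  max |A_i| (d(s)^2 + (pi~^i(a|s) - pi(a|s))^2) / 2, and summing the d(s)^2 part over the joint
  actions produces the factor |A|.\<close>

lemma mult_mult_le_half_sum_squares:
  fixes x y c M :: real
  assumes "\<bar>c\<bar> \<le> M"
  shows "x * (y * c) \<le> M / 2 * (x\<^sup>2 + y\<^sup>2)"
proof -
  have "x * (y * c) \<le> \<bar>x\<bar> * \<bar>y\<bar> * \<bar>c\<bar>"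
    by (metis abs_ge_self abs_mult mult.assoc)
  also have "\<dots> \<le> \<bar>x\<bar> * \<bar>y\<bar> * M"
    using assms by (simp add: mult_left_mono)
  also have "\<dots> \<le> (x\<^sup>2 + y\<^sup>2) / 2 * M"
    using sum_squares_bound[of "\<bar>x\<bar>" "\<bar>y\<bar>"] assms by (intro mult_right_mono) auto
  finally show ?thesis by (simp add: mult.commute)
qed

lemma sum_weighted_le_half_sum_squares:
  fixes d :: "'s \<Rightarrow> real" and D A :: "'s \<Rightarrow> 'b \<Rightarrow> real"
  assumes "finite J" and "\<And>s a. a \<in> J \<Longrightarrow> \<bar>A s a\<bar> \<le> M"
  shows "(\<Sum>s\<in>S. \<Sum>a\<in>J. d s * (D s a * A s a))
    \<le> 1/2 * M * real (card J) * (\<Sum>s\<in>S. (d s)\<^sup>2) + 1/2 * M * (\<Sum>s\<in>S. \<Sum>a\<in>J. (D s a)\<^sup>2)"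
proof -
  have "(\<Sum>s\<in>S. \<Sum>a\<in>J. d s * (D s a * A s a))
      \<le> (\<Sum>s\<in>S. \<Sum>a\<in>J. M / 2 * ((d s)\<^sup>2 + (D s a)\<^sup>2))"
    using assms(2) by (intro sum_mono mult_mult_le_half_sum_squares) auto
  also have "\<dots> = 1/2 * M * real (card J) * (\<Sum>s\<in>S. (d s)\<^sup>2)
      + 1/2 * M * (\<Sum>s\<in>S. \<Sum>a\<in>J. (D s a)\<^sup>2)"
    by (simp add: distrib_left sum.distrib sum_distrib_left mult_ac)
  finally show ?thesis .
qed

lemma zeta_sugg_minus_zeta_joint:
  "zeta_sugg N Act P R d0 \<gamma> pol' sugg - zeta_joint N Act P R d0 \<gamma> pol' pol
    = (\<Sum>i<N. \<Sum>s\<in>UNIV. \<Sum>a\<in>joint_actions N Act. dvis N Act P d0 \<gamma> pol' s *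
        ((jprob N (sugg i) s a - jprob N pol s a) * Afun N Act P R \<gamma> pol' i s a))"
proof -
  have "zeta_joint N Act P R d0 \<gamma> pol' pol
      = (\<Sum>i<N. \<Sum>s\<in>UNIV. \<Sum>a\<in>joint_actions N Act.
          dvis N Act P d0 \<gamma> pol' s * (jprob N pol s a * Afun N Act P R \<gamma> pol' i s a))"
    unfolding zeta_joint_def
    by (subst sum.swap) (simp add: sum_distrib_left sum.swap[of _ "{..<N}"])
  then show ?thesis
    unfolding zeta_sugg_def
    by (simp add: sum_distrib_left sum_subtractf[symmetric] algebra_simps)
qed

lemma finite_joint_actions:
  assumes "\<forall>j<N. finite (Act j)"
  shows "finite (joint_actions N Act)"
  unfolding joint_actions_def using assms by (intro finite_PiE) auto

theorem lemma2:
  fixes N :: nat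
    and Act :: "nat \<Rightarrow> 'a set"
    and P :: "'s::finite \<Rightarrow> (nat \<Rightarrow> 'a) \<Rightarrow> 's \<Rightarrow> real"
    and R :: "nat \<Rightarrow> 's \<Rightarrow> (nat \<Rightarrow> 'a) \<Rightarrow> real"
    and d0 :: "'s \<Rightarrow> real"
    and \<gamma> :: real
    and pol' pol :: "nat \<Rightarrow> 's \<Rightarrow> 'a \<Rightarrow> real"
    and sugg :: "nat \<Rightarrow> nat \<Rightarrow> 's \<Rightarrow> 'a \<Rightarrow> real"
  assumes fin_act: "\<forall>j<N. finite (Act j) \<and> Act j \<noteq> {}"
    and P_stoch: "\<forall>s. \<forall>a\<in>joint_actions N Act. (\<forall>y. P s a y \<ge> 0) \<and> (\<Sum>y\<in>UNIV. P s a y) = 1"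
    and d0_dist: "(\<forall>s. d0 s \<ge> 0) \<and> (\<Sum>s\<in>UNIV. d0 s) = 1"
    and gamma: "0 < \<gamma>" "\<gamma> < 1"
    and pol'_ok: "is_joint_policy N Act pol'"
    and pol_ok: "is_joint_policy N Act pol"
    and sugg_ok: "\<forall>i<N. is_joint_policy N Act (sugg i)"
    and sugg_own: "\<forall>i<N. \<forall>s. \<forall>b\<in>Act i. sugg i i s b = pol i s b"
  shows "zeta_sugg N Act P R d0 \<gamma> pol' sugg - zeta_joint N Act P R d0 \<gamma> pol' pol
    \<le> (\<Sum>i<N. 1/2 * Max ((\<lambda>(s, a). \<bar>Afun N Act P R \<gamma> pol' i s a\<bar>) ` (UNIV \<times> joint_actions N Act))
              * real (card (joint_actions N Act)) * (\<Sum>s\<in>UNIV. (dvis N Act P d0 \<gamma> pol' s)\<^sup>2))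
      + (\<Sum>i<N. 1/2 * Max ((\<lambda>(s, a). \<bar>Afun N Act P R \<gamma> pol' i s a\<bar>) ` (UNIV \<times> joint_actions N Act))
              * (\<Sum>s\<in>UNIV. \<Sum>a\<in>joint_actions N Act. (jprob N (sugg i) s a - jprob N pol s a)\<^sup>2))"
proof -
  let ?J = "joint_actions N Act"
  let ?M = "\<lambda>i. Max ((\<lambda>(s, a). \<bar>Afun N Act P R \<gamma> pol' i s a\<bar>) ` (UNIV \<times> ?J))"
  have fin_J: "finite ?J"
    using fin_act by (simp add: finite_joint_actions)
  have "\<bar>Afun N Act P R \<gamma> pol' i s a\<bar> \<le> ?M i" if "a \<in> ?J" for i s a
    using fin_J that by (intro Max_ge) auto
  with fin_J have "(\<Sum>s\<in>UNIV. \<Sum>a\<in>?J. dvis N Act P d0 \<gamma> pol' s *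
        ((jprob N (sugg i) s a - jprob N pol s a) * Afun N Act P R \<gamma> pol' i s a))
      \<le> 1/2 * ?M i * real (card ?J) * (\<Sum>s\<in>UNIV. (dvis N Act P d0 \<gamma> pol' s)\<^sup>2)
        + 1/2 * ?M i * (\<Sum>s\<in>UNIV. \<Sum>a\<in>?J. (jprob N (sugg i) s a - jprob N pol s a)\<^sup>2)" for i
    by (intro sum_weighted_le_half_sum_squares)
  then show ?thesis
    unfolding zeta_sugg_minus_zeta_joint sum.distrib[symmetric] by (intro sum_mono)
qed

end
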